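(* Let $A=\{h\in\mathfrak{S}Sym:(\mathrm{id}\otimes\mathcal{D})\Delta(h)=h\otimes1\}$ be the left Hopf kernel of $\mathcal{D}\colon\mathfrak{S}Sym\to QSym$, and $A_n$ its homogeneous component of degree $n\ge1$. Then a basis of $A_n$ is $\{\mathcal{M}_u\}$ where $u$ runs over those $u\in\mathfrak{S}_n$ for which there is no $k\in\{0,1,\ldots,n-1\}$ with $u_{k+i}=i$ for all $1\le i\le n-k$. In particular $\dim A_n=n!-\sum_{k=0}^{n-1}k!$.
   Context: $\mathfrak{S}Sym$ is the Malvenuto–Reutenauer Hopf algebra over $\mathbb{Q}$ with basis $\{\mathcal{F}_u:u\in\mathfrak{S}_n,n\ge0\}$, graded by $n$; product $\mathcal{F}_u\cdot\mathcal{F}_v=\sum_\zeta\mathcal{F}_{(u\times v)\zeta^{-1}}$ over $\zeta\in\mathfrak{S}_{p+q}$ increasing on $[1,p]$ and on $[p+1,p+q]$ (where $(u\times v)(i)=u_i$, $i\le p$, $(u\times v)(p+j)=p+v_j$, and permutation product is composition); coproduct $\Delta(\mathcal{F}_u)=\sum_{p=0}^n\mathcal{F}_{\mathrm{st}(u_1..u_p)}\otimes\mathcal{F}_{\mathrm{st}(u_{p+1}..u_n)}$ with $\mathrm{st}$ the permutation with the same relative order. Weak order $u\le v$ iff $\mathrm{Inv}(u)\subseteq\mathrm{Inv}(v)$, Möbius function $\mu$, $\mathcal{M}_u=\sum_{v\ge u}\mu(u,v)\mathcal{F}_v$. $QSym$ is the Hopf algebra of quasi-symmetric functions with fundamental basis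 $F_J$ ($J\subseteq[n-1]$), and $\mathcal{D}(\mathcal{F}_u)=F_{\mathrm{Des}(u)}$, $\mathrm{Des}(u)=\{p:u_p>u_{p+1}\}$, is a Hopf algebra morphism. *)

theory Defs
  imports Complex_Main
begin

definition perms :: "nat \<Rightarrow> nat list set" where
  "perms n = {u. distinct u \<and> set u = {1..n}}"

definition is_perm :: "nat list \<Rightarrow> bool" where
  "is_perm u \<longleftrightarrow> u \<in> perms (length u)"

definition st :: "nat list \<Rightarrow> nat list" where
  "st xs = map (\<lambda>x. card {y \<in> set xs. y \<le> x}) xs"

text \<open>Descent set, positions 1-based: p with u_p > u_{p+1}.\<close>
definition Des :: "nat list \<Rightarrow> nat set" where
  "Des u = {p. 1 \<le> p \<and> p < length u \<and> u ! (p - 1) > u ! p}"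

text \<open>Inversions (positions, 1-based): pairs i < j with u_i > u_j.\<close>
definition Inv :: "nat list \<Rightarrow> (nat \<times> nat) set" where
  "Inv u = {(i, j). 1 \<le> i \<and> i < j \<and> j \<le> length u \<and> u ! (i - 1) > u ! (j - 1)}"

definition wle :: "nat list \<Rightarrow> nat list \<Rightarrow> bool" where
  "wle u v \<longleftrightarrow> is_perm u \<and> is_perm v \<and> length u = length v \<and> Inv u \<subseteq> Inv v"

definition wlt :: "nat list \<Rightarrow> nat list \<Rightarrow> bool" where
  "wlt u v \<longleftrightarrow> wle u v \<and> \<not> wle v u"

lemma finite_perms: "finite (perms n)"
proof -
  have "perms n \<subseteq> {xs. set xs \<subseteq> {1..n} \<and> length xs = n}"
    unfolding perms_def using distinct_card by fastforce
  then show ?thesis using finite_lists_length_eq[of "{1..n}" n] finite_subset by blast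
qed

lemma Inv_finite: "finite (Inv u)"
proof -
  have "Inv u \<subseteq> {0..length u} \<times> {0..length u}" unfolding Inv_def by auto
  then show ?thesis by (rule finite_subset) auto
qed

function mob :: "nat list \<Rightarrow> nat list \<Rightarrow> rat" where
  "mob u v = (if u = v then 1
              else if wle u v then
                - (\<Sum>w \<in> {w \<in> perms (length v). wle u w \<and> wlt w v}. mob u w)
              else 0)"
  by pat_completeness auto
termination
proof (relation "measure (\<lambda>(u, v). card (Inv v))")
  fix u v w
  assume "w \<in> {w \<in> perms (length v). wle u w \<and> wlt w v}"
  then have "Inv w \<subset> Inv v" unfolding wlt_def wle_def by auto
  then show "((u, w), u, v) \<in> measure (\<lambda>(u, v). card (Inv v))"
    using Inv_finite psubset_card_mono by auto
qed auto

text \<open>An element h of SSym is its coefficient function in the basis F_u: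
  h = sum_u h(u) F_u, finitely supported on permutations.\<close>
definition SSym :: "(nat list \<Rightarrow> rat) set" where
  "SSym = {h. finite {u. h u \<noteq> 0} \<and> (\<forall>u. h u \<noteq> 0 \<longrightarrow> is_perm u)}"

definition SSym_deg :: "nat \<Rightarrow> (nat list \<Rightarrow> rat) set" where
  "SSym_deg n = {h \<in> SSym. \<forall>u. h u \<noteq> 0 \<longrightarrow> u \<in> perms n}"

definition Mb :: "nat list \<Rightarrow> nat list \<Rightarrow> rat" where
  "Mb u = (\<lambda>v. if wle u v then mob u v else 0)"

text \<open>Elements of SSym \<otimes> QSym in coordinates of the basis F_w \<otimes> F_J, where
  w is a permutation and F_J (J \<subseteq> [m-1]) lies in QSym of degree m;
  the coordinate index is (w, m, J).
  (id \<otimes> D) \<Delta> (F_u) = sum_p F_{st(u_1..u_p)} \<otimes> F_{Des(st(u_{p+1}..u_n))}.\<close>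
definition idD_coprod :: "(nat list \<Rightarrow> rat) \<Rightarrow> nat list \<times> nat \<times> nat set \<Rightarrow> rat" where
  "idD_coprod h = (\<lambda>(w, m, J). \<Sum>u \<in> {u. h u \<noteq> 0}.
      h u * (if length u = length w + m \<and> st (take (length w) u) = w
                \<and> Des (st (drop (length w) u)) = J then 1 else 0))"

text \<open>h \<otimes> 1, where 1 = F_{} in QSym of degree 0.\<close>
definition tensor_one :: "(nat list \<Rightarrow> rat) \<Rightarrow> nat list \<times> nat \<times> nat set \<Rightarrow> rat" where
  "tensor_one h = (\<lambda>(w, m, J). if m = 0 \<and> J = {} then h w else 0)"

definition hopf_kernel :: "(nat list \<Rightarrow> rat) set" where
  "hopf_kernel = {h \<in> SSym. idD_coprod h = tensor_one h}"

definition hopf_kernel_deg :: "nat \<Rightarrow> (nat list \<Rightarrow> rat) set" where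
  "hopf_kernel_deg n = hopf_kernel \<inter> SSym_deg n"

end

theory Submission
  imports Defs "HOL-Combinatorics.Multiset_Permutations"
begin

text \<open>The coefficient of \<open>\<F>\<^sub>w \<otimes> F\<^sub>J\<close> (\<open>w \<in> \<frakS>\<^sub>k\<close>) in \<open>(id \<otimes> \<D>) \<Delta> h\<close> sums the
  \<open>\<F>\<close>-coefficients of \<open>h\<close> at the \<open>v\<close> with \<open>st (v\<^sub>1..v\<^sub>k) = w\<close> and \<open>Des (v\<^sub>k\<^sub>+\<^sub>1..v\<^sub>n) = J\<close>.
  Splitting at the largest element of \<open>J\<close> shows that \<open>h\<close> lies in the kernel as soon as these
  coefficients vanish for \<open>J = {}\<close>, i.e. for increasing tails.

  Now \<open>v \<le> x / id\<^sub>n\<^sub>-\<^sub>k\<close> in the weak order iff \<open>st (v\<^sub>1..v\<^sub>k) \<le> x\<close> and \<open>v\<^sub>k\<^sub>+\<^sub>1..v\<^sub>n\<close>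
  increases. Summing the \<open>J = {}\<close> coefficients over \<open>w \<le> x\<close> therefore gives the coefficient of
  \<open>\<M>\<^bsub>x / id\<^esub>\<close> in \<open>h\<close>, and Moebius inversion on \<open>\<frakS>\<^sub>k\<close> turns the kernel condition into:
  the \<open>\<M>\<close>-coefficients of \<open>h\<close> vanish at every \<open>x / id\<^sub>n\<^sub>-\<^sub>k\<close> with \<open>k < n\<close>. These are exactly
  the permutations ending in a block \<open>1, \<dots>, n - k\<close>, so the remaining \<open>\<M>\<^sub>u\<close> form a basis of
  the kernel; the last letter \<open>n - k\<close> separates the blocks, which have \<open>k!\<close> elements each.\<close>

declare mob.simps[simp del]

subsection \<open>Relative order of lists and standardization\<close>

definition same_pattern :: "nat list \<Rightarrow> nat list \<Rightarrow> bool" where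
  "same_pattern xs ys \<longleftrightarrow> length xs = length ys \<and>
     (\<forall>i<length xs. \<forall>j<length xs. xs ! i < xs ! j \<longleftrightarrow> ys ! i < ys ! j)"

lemma same_pattern_sym: "same_pattern xs ys \<Longrightarrow> same_pattern ys xs"
  by (auto simp: same_pattern_def)

lemma same_pattern_take: "same_pattern xs ys \<Longrightarrow> same_pattern (take k xs) (take k ys)"
  by (auto simp: same_pattern_def)

lemma same_pattern_drop: "same_pattern xs ys \<Longrightarrow> same_pattern (drop k xs) (drop k ys)"
  by (auto simp: same_pattern_def)

lemma distinct_if_same_pattern: "distinct xs \<Longrightarrow> same_pattern xs ys \<Longrightarrow> distinct ys"
  unfolding same_pattern_def distinct_conv_nth by (metis linorder_neq_iff)

lemma length_st [simp]: "length (st xs) = length xs"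
  by (simp add: st_def)

lemma perms_length: "u \<in> perms n \<Longrightarrow> length u = n"
  unfolding perms_def by (metis (mono_tags) card_atLeastAtMost diff_Suc_1 distinct_card mem_Collect_eq)

lemma perms_distinct: "u \<in> perms n \<Longrightarrow> distinct u"
  by (simp add: perms_def)

lemma nth_st:
  assumes "distinct xs" "i < length xs"
  shows "st xs ! i = card {l. l < length xs \<and> xs ! l \<le> xs ! i}"
proof -
  have "{y \<in> set xs. y \<le> xs ! i} = (nth xs) ` {l. l < length xs \<and> xs ! l \<le> xs ! i}"
    by (auto simp: in_set_conv_nth)
  moreover have "inj_on (nth xs) {l. l < length xs \<and> xs ! l \<le> xs ! i}"
    using assms(1) by (auto simp: inj_on_def nth_eq_iff_index_eq)
  ultimately show ?thesis
    using assms by (simp add: st_def card_image)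
qed

lemma st_less_iff:
  assumes "distinct xs" "i < length xs" "j < length xs"
  shows "st xs ! i < st xs ! j \<longleftrightarrow> xs ! i < xs ! j"
proof -
  have less: "st xs ! a < st xs ! b" if ab: "xs ! a < xs ! b" "a < length xs" "b < length xs" for a b
  proof -
    let ?below = "\<lambda>c. {l. l < length xs \<and> xs ! l \<le> xs ! c}"
    have "?below a \<subseteq> ?below b"
      using ab(1) by (auto intro: order.trans)
    moreover have "b \<in> ?below b" "b \<notin> ?below a"
      using ab by auto
    ultimately have "card (?below a) < card (?below b)"
      by (intro psubset_card_mono) auto
    then show ?thesis
      using nth_st[OF assms(1)] ab by simp
  qed
  show ?thesis
  proof
    assume "st xs ! i < st xs ! j"
    then have "xs ! i \<noteq> xs ! j" "\<not> xs ! j < xs ! i"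
      using less[of j i] assms by (auto simp: nth_eq_iff_index_eq)
    then show "xs ! i < xs ! j" by simp
  next
    assume "xs ! i < xs ! j"
    then show "st xs ! i < st xs ! j"
      using less assms by blast
  qed
qed

lemma same_pattern_st: "distinct xs \<Longrightarrow> same_pattern (st xs) xs"
  by (simp add: same_pattern_def st_less_iff)

lemma distinct_st: "distinct xs \<Longrightarrow> distinct (st xs)"
  using distinct_if_same_pattern[OF _ same_pattern_sym[OF same_pattern_st]] by blast

lemma st_eq_if_same_pattern:
  assumes "distinct xs" "distinct ys" "same_pattern xs ys"
  shows "st xs = st ys"
proof (rule nth_equalityI)
  have len: "length xs = length ys"
    using assms(3) by (simp add: same_pattern_def)
  then show "length (st xs) = length (st ys)" by simp
  fix i assume i: "i < length (st xs)"
  have "{l. l < length xs \<and> xs ! l \<le> xs ! i} = {l. l < length ys \<and> ys ! l \<le> ys ! i}"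
    using assms(3) i len unfolding same_pattern_def by (auto simp: not_less[symmetric])
  then show "st xs ! i = st ys ! i"
    using i len by (simp add: nth_st[OF assms(1)] nth_st[OF assms(2)])
qed

lemma st_in_perms:
  assumes "distinct xs"
  shows "st xs \<in> perms (length xs)"
proof -
  have "set (st xs) \<subseteq> {1..length xs}"
  proof
    fix y assume "y \<in> set (st xs)"
    then obtain x where x: "x \<in> set xs" "y = card {z \<in> set xs. z \<le> x}"
      by (auto simp: st_def)
    have "card {z \<in> set xs. z \<le> x} \<le> card (set xs)"
      by (intro card_mono) auto
    moreover have "0 < card {z \<in> set xs. z \<le> x}"
      using x(1) by (auto simp: card_gt_0_iff)
    ultimately show "y \<in> {1..length xs}"
      using x assms by (simp add: distinct_card Suc_le_eq)
  qed
  moreover have "card (set (st xs)) = card {1..length xs}"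
    using distinct_st[OF assms] by (simp add: distinct_card)
  ultimately have "set (st xs) = {1..length xs}"
    by (intro card_subset_eq) auto
  then show ?thesis
    using distinct_st[OF assms] by (simp add: perms_def)
qed

lemma st_take_in_perms: "u \<in> perms n \<Longrightarrow> k \<le> n \<Longrightarrow> st (take k u) \<in> perms k"
  using st_in_perms[of "take k u"] by (simp add: perms_distinct perms_length)

lemma st_perm:
  assumes "u \<in> perms n"
  shows "st u = u"
proof -
  have "card {y \<in> set u. y \<le> x} = x" if "x \<in> set u" for x
  proof -
    have "{y \<in> set u. y \<le> x} = {1..x}"
      using assms that by (auto simp: perms_def)
    then show ?thesis by simp
  qed
  then show ?thesis
    unfolding st_def by (simp add: map_idI)
qed

lemma Des_same_pattern:
  assumes "same_pattern xs ys"
  shows "Des xs = Des ys"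
proof -
  have "xs ! p < xs ! (p - 1) \<longleftrightarrow> ys ! p < ys ! (p - 1)" if "1 \<le> p" "p < length xs" for p
  proof -
    have "p - 1 < length xs"
      using that by arith
    then show ?thesis
      using assms that unfolding same_pattern_def by blast
  qed
  then show ?thesis
    using assms unfolding Des_def same_pattern_def by auto
qed

lemma Des_st: "distinct xs \<Longrightarrow> Des (st xs) = Des xs"
  using Des_same_pattern same_pattern_st by blast

lemma Des_take: "Des (take d xs) = Des xs \<inter> {..<d}"
  unfolding Des_def by auto

lemma Des_drop: "Des (drop d xs) = {q. 1 \<le> q \<and> q + d \<in> Des xs}"
proof -
  have "drop d xs ! (q - 1) > drop d xs ! q \<longleftrightarrow> xs ! (q + d - 1) > xs ! (q + d)"
    if "1 \<le> q" "q < length xs - d" for q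
    using that by (simp add: add.commute add_diff_assoc2)
  then show ?thesis
    unfolding Des_def by (auto simp: add.commute)
qed

lemma Des_drop_eq_empty_iff: "Des (drop d xs) = {} \<longleftrightarrow> Des xs \<subseteq> {..d}"
proof -
  have "(\<forall>q \<ge> 1. q + d \<notin> Des xs) \<longleftrightarrow> Des xs \<subseteq> {..d}"
  proof
    assume tail: "\<forall>q \<ge> 1. q + d \<notin> Des xs"
    show "Des xs \<subseteq> {..d}"
    proof
      fix p assume "p \<in> Des xs"
      show "p \<in> {..d}"
      proof (rule ccontr)
        assume "p \<notin> {..d}"
        then have "1 \<le> p - d" "(p - d) + d = p"
          by auto
        then show False
          using tail \<open>p \<in> Des xs\<close> by metis
      qed
    qed
  qed auto
  then show ?thesis
    by (auto simp: Des_drop)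
qed

lemma Inv_same_pattern:
  assumes "same_pattern xs ys"
  shows "Inv xs = Inv ys"
proof -
  have "xs ! (j - 1) < xs ! (i - 1) \<longleftrightarrow> ys ! (j - 1) < ys ! (i - 1)"
    if "1 \<le> i" "i < j" "j \<le> length xs" for i j
  proof -
    have "i - 1 < length xs" "j - 1 < length xs"
      using that by arith+
    then show ?thesis
      using assms unfolding same_pattern_def by blast
  qed
  then show ?thesis
    using assms unfolding Inv_def same_pattern_def by auto
qed

lemma Inv_st: "distinct xs \<Longrightarrow> Inv (st xs) = Inv xs"
  using Inv_same_pattern same_pattern_st by blast

lemma Inv_take: "Inv (take k xs) = {(i, j) \<in> Inv xs. j \<le> k}"
  unfolding Inv_def by auto

lemma sorted_drop_iff_Inv: "sorted (drop k xs) \<longleftrightarrow> (\<forall>(i, j) \<in> Inv xs. i \<le> k)"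
proof
  assume sorted: "sorted (drop k xs)"
  show "\<forall>(i, j) \<in> Inv xs. i \<le> k"
  proof (clarify, rule ccontr)
    fix i j assume "(i, j) \<in> Inv xs" "\<not> i \<le> k"
    moreover have "drop k xs ! (i - 1 - k) \<le> drop k xs ! (j - 1 - k)"
      using sorted calculation by (intro sorted_nth_mono) (auto simp: Inv_def)
    ultimately show False
      by (auto simp: Inv_def)
  qed
next
  assume inv: "\<forall>(i, j) \<in> Inv xs. i \<le> k"
  show "sorted (drop k xs)"
    unfolding sorted_iff_nth_mono_less
  proof (intro allI impI)
    fix a b assume "a < b" "b < length (drop k xs)"
    then have "(Suc (k + a), Suc (k + b)) \<notin> Inv xs"
      using inv by auto
    then show "drop k xs ! a \<le> drop k xs ! b"
      using \<open>a < b\<close> \<open>b < length (drop k xs)\<close> by (auto simp: Inv_def)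
  qed
qed

subsection \<open>The weak order\<close>

lemma same_pattern_if_Inv_eq:
  assumes "distinct u" "distinct v" "length u = length v" "Inv u = Inv v"
  shows "same_pattern u v"
  unfolding same_pattern_def
proof (intro conjI allI impI)
  show "length u = length v" by fact
  fix i j assume ij: "i < length u" "j < length u"
  have inv: "u ! b < u ! a \<longleftrightarrow> v ! b < v ! a" if "a < b" "b < length u" for a b
  proof -
    have "(Suc a, Suc b) \<in> Inv u \<longleftrightarrow> u ! b < u ! a"
      using that by (simp add: Inv_def)
    moreover have "(Suc a, Suc b) \<in> Inv v \<longleftrightarrow> v ! b < v ! a"
      using that assms(3) by (simp add: Inv_def)
    ultimately show ?thesis
      using assms(4) by simp
  qed
  consider "i < j" | "i = j" | "j < i" by arith
  then show "u ! i < u ! j \<longleftrightarrow> v ! i < v ! j"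
  proof cases
    case 1
    then have "u ! i \<noteq> u ! j" "v ! i \<noteq> v ! j"
      using ij assms by (auto simp: nth_eq_iff_index_eq)
    then show ?thesis
      using inv[OF 1] ij by auto
  qed (use inv ij in auto)
qed

lemma Inv_inj_on_perms:
  assumes "u \<in> perms n" "v \<in> perms n" "Inv u = Inv v"
  shows "u = v"
proof -
  have "same_pattern u v"
    using assms by (intro same_pattern_if_Inv_eq) (auto simp: perms_distinct perms_length)
  then have "st u = st v"
    using assms by (intro st_eq_if_same_pattern) (auto simp: perms_distinct)
  then show ?thesis
    using st_perm assms by metis
qed

lemma wle_imp_perms: "wle u v \<Longrightarrow> u \<in> perms (length u) \<and> v \<in> perms (length u)"
  by (auto simp: wle_def is_perm_def)

lemma wle_refl: "u \<in> perms n \<Longrightarrow> wle u u"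
  by (auto simp: wle_def is_perm_def perms_length)

lemma wle_trans: "wle u v \<Longrightarrow> wle v w \<Longrightarrow> wle u w"
  unfolding wle_def by auto

lemma wle_antisym: "wle u v \<Longrightarrow> wle v u \<Longrightarrow> u = v"
  using Inv_inj_on_perms[of u "length u" v] wle_imp_perms[of u v] by (auto simp: wle_def)

lemma wle_perms_iff:
  "u \<in> perms n \<Longrightarrow> v \<in> perms n \<Longrightarrow> wle u v \<longleftrightarrow> Inv u \<subseteq> Inv v"
  by (simp add: wle_def is_perm_def perms_length)

lemma wlt_iff: "wlt u v \<longleftrightarrow> wle u v \<and> u \<noteq> v"
  unfolding wlt_def using wle_antisym wle_imp_perms wle_refl by blast

lemma card_Inv_less_if_wle:
  assumes "wle v u" "v \<noteq> u"
  shows "card (Inv v) < card (Inv u)"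
proof -
  have "Inv v \<noteq> Inv u"
    using assms Inv_inj_on_perms[of v "length v" u] wle_imp_perms[of v u] by auto
  then have "Inv v \<subset> Inv u"
    using assms(1) by (auto simp: wle_def)
  then show ?thesis
    using Inv_finite psubset_card_mono by blast
qed

subsection \<open>Moebius inversion on the weak order\<close>

lemma eq_zero_if_sums_below_eq_zero:
  fixes g :: "'a \<Rightarrow> 'b::comm_monoid_add" and rank :: "'a \<Rightarrow> nat"
  assumes "finite S"
    and refl: "\<And>u. u \<in> S \<Longrightarrow> R u u"
    and rank: "\<And>u v. u \<in> S \<Longrightarrow> v \<in> S \<Longrightarrow> R v u \<Longrightarrow> v \<noteq> u \<Longrightarrow> rank v < rank u"
    and sums: "\<And>u. u \<in> S \<Longrightarrow> (\<Sum>v \<in> {v \<in> S. R v u}. g v) = 0"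
    and "u \<in> S"
  shows "g u = 0"
  using \<open>u \<in> S\<close>
proof (induction "rank u" arbitrary: u rule: less_induct)
  case less
  have "{v \<in> S. R v u} = insert u {v \<in> S. R v u \<and> v \<noteq> u}"
    using refl less.prems by auto
  then have "(\<Sum>v \<in> {v \<in> S. R v u}. g v) = g u + (\<Sum>v \<in> {v \<in> S. R v u \<and> v \<noteq> u}. g v)"
    using \<open>finite S\<close> by simp
  also have "(\<Sum>v \<in> {v \<in> S. R v u \<and> v \<noteq> u}. g v) = 0"
    using less rank by (intro sum.neutral) auto
  finally show "g u = 0"
    using sums less.prems by simp
qed

lemma eq_zero_if_sums_below_wle_eq_zero:
  fixes g :: "nat list \<Rightarrow> 'b::comm_monoid_add"
  assumes "\<And>u. u \<in> perms n \<Longrightarrow> (\<Sum>v \<in> {v \<in> perms n. wle v u}. g v) = 0" and "u \<in> perms n"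
  shows "g u = 0"
  by (rule eq_zero_if_sums_below_eq_zero[where R = wle and rank = "\<lambda>u. card (Inv u)"])
    (use finite_perms wle_refl card_Inv_less_if_wle assms in auto)

subsection \<open>Coordinates in the basis \<open>\<M>\<close>\<close>

text \<open>Since \<open>\<F>\<^sub>v\<close> is the sum of the \<open>\<M>\<^sub>u\<close> over \<open>u \<ge> v\<close>, the coefficient of \<open>\<M>\<^sub>u\<close>
  in \<open>h\<close> is the sum of the \<open>\<F>\<close>-coefficients of \<open>h\<close> below \<open>u\<close>.\<close>

definition M_coeff :: "nat \<Rightarrow> (nat list \<Rightarrow> rat) \<Rightarrow> nat list \<Rightarrow> rat" where
  "M_coeff n h u = (\<Sum>v \<in> {v \<in> perms n. wle v u}. h v)"

lemma M_coeff_Mb: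
  assumes u: "u \<in> perms n" and u': "u' \<in> perms n"
  shows "M_coeff n (Mb u) u' = (if u = u' then 1 else 0)"
proof -
  let ?I = "{v \<in> perms n. wle u v \<and> wle v u'}"
  have "M_coeff n (Mb u) u' = (\<Sum>v \<in> {v \<in> perms n. wle v u'}. if wle u v then mob u v else 0)"
    by (simp add: M_coeff_def Mb_def)
  also have "\<dots> = (\<Sum>v \<in> {v \<in> {v \<in> perms n. wle v u'}. wle u v}. mob u v)"
    by (rule sum.inter_filter[symmetric]) (simp add: finite_perms)
  also have "{v \<in> {v \<in> perms n. wle v u'}. wle u v} = ?I"
    by auto
  finally have interval: "M_coeff n (Mb u) u' = (\<Sum>v \<in> ?I. mob u v)" .
  consider "u = u'" | "u \<noteq> u'" "wle u u'" | "\<not> wle u u'"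
    by blast
  then show ?thesis
  proof cases
    case 1
    then have "?I = {u}"
      using wle_antisym wle_refl[OF u] u by auto
    then show ?thesis
      using 1 interval by (simp add: mob.simps)
  next
    case 2
    let ?S = "{w \<in> perms n. wle u w \<and> wlt w u'}"
    have "mob u u' = - (\<Sum>w \<in> ?S. mob u w)"
      using 2 perms_length[OF u'] by (subst mob.simps) simp
    moreover have "?I = insert u' ?S" "u' \<notin> ?S"
      using 2 u' wle_refl[OF u'] by (auto simp: wlt_iff)
    ultimately show ?thesis
      using interval 2 finite_perms by simp
  next
    case 3
    then have empty: "?I = {}"
      using wle_trans by blast
    show ?thesis
      unfolding interval empty using 3 wle_refl[OF u] by auto
  qed
qed

lemma Mb_in_SSym_deg:
  assumes "u \<in> perms n"
  shows "Mb u \<in> SSym_deg n"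
proof -
  have supp: "{v. Mb u v \<noteq> 0} \<subseteq> perms n"
  proof
    fix v assume "v \<in> {v. Mb u v \<noteq> 0}"
    then have "wle u v"
      by (auto simp: Mb_def split: if_splits)
    then show "v \<in> perms n"
      using wle_imp_perms perms_length[OF assms] by metis
  qed
  then have "finite {v. Mb u v \<noteq> 0}"
    using finite_perms finite_subset by blast
  with supp show ?thesis
    by (auto simp: SSym_deg_def SSym_def is_perm_def perms_length)
qed

lemma SSym_deg_vanishes: "h \<in> SSym_deg n \<Longrightarrow> v \<notin> perms n \<Longrightarrow> h v = 0"
  by (auto simp: SSym_deg_def)

lemma M_coeff_sum_Mb:
  assumes "S \<subseteq> perms n" "u' \<in> perms n"
  shows "M_coeff n (\<lambda>v. \<Sum>u \<in> S. a u * Mb u v) u' = (if u' \<in> S then a u' else 0)"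
proof -
  have "finite S"
    using assms(1) finite_perms finite_subset by blast
  have "M_coeff n (\<lambda>v. \<Sum>u \<in> S. a u * Mb u v) u' = (\<Sum>u \<in> S. a u * M_coeff n (Mb u) u')"
    unfolding M_coeff_def by (simp add: sum_distrib_left sum.swap[of _ S])
  also have "\<dots> = (\<Sum>u \<in> S. if u = u' then a u' else 0)"
    using assms by (intro sum.cong) (auto simp: M_coeff_Mb)
  also have "\<dots> = (if u' \<in> S then a u' else 0)"
    using \<open>finite S\<close> by (simp add: sum.delta')
  finally show ?thesis .
qed

lemma unique_M_expansion:
  assumes h: "h \<in> SSym_deg n" and S: "S \<subseteq> perms n"
    and vanish: "\<And>u. u \<in> perms n - S \<Longrightarrow> M_coeff n h u = 0"
  shows "\<exists>!a. (\<forall>u. u \<notin> S \<longrightarrow> a u = 0) \<and> h = (\<lambda>v. \<Sum>u \<in> S. a u * Mb u v)"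
proof
  define a where "a u = (if u \<in> S then M_coeff n h u else 0)" for u
  define g where "g v = h v - (\<Sum>u \<in> S. a u * Mb u v)" for v
  have "M_coeff n g u = 0" if "u \<in> perms n" for u
  proof -
    have "M_coeff n g u = M_coeff n h u - M_coeff n (\<lambda>v. \<Sum>u \<in> S. a u * Mb u v) u"
      unfolding g_def M_coeff_def by (simp add: sum_subtractf)
    then show ?thesis
      using that vanish S by (simp add: M_coeff_sum_Mb a_def)
  qed
  then have "g v = 0" if "v \<in> perms n" for v
    using that unfolding M_coeff_def by (rule eq_zero_if_sums_below_wle_eq_zero)
  moreover have "g v = 0" if "v \<notin> perms n" for v
  proof -
    have "Mb u v = 0" if "u \<in> S" for u
      using that S \<open>v \<notin> perms n\<close> Mb_in_SSym_deg SSym_deg_vanishes by blast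
    then show ?thesis
      using that h unfolding g_def by (simp add: SSym_deg_vanishes)
  qed
  ultimately show "(\<forall>u. u \<notin> S \<longrightarrow> a u = 0) \<and> h = (\<lambda>v. \<Sum>u \<in> S. a u * Mb u v)"
    unfolding a_def g_def by (auto simp: fun_eq_iff)
next
  fix b assume b: "(\<forall>u. u \<notin> S \<longrightarrow> b u = 0) \<and> h = (\<lambda>v. \<Sum>u \<in> S. b u * Mb u v)"
  show "b = (\<lambda>u. if u \<in> S then M_coeff n h u else 0)"
  proof
    fix u
    show "b u = (if u \<in> S then M_coeff n h u else 0)"
      using b M_coeff_sum_Mb[OF S, of u b] S by auto
  qed
qed

subsection \<open>The coefficients of \<open>(id \<otimes> \<D>) \<Delta>\<close>\<close>

definition coprod_coeff :: "nat \<Rightarrow> (nat list \<Rightarrow> rat) \<Rightarrow> nat \<Rightarrow> nat list \<Rightarrow> nat set \<Rightarrow> rat" where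
  "coprod_coeff n h k w J =
     (\<Sum>u \<in> perms n. if st (take k u) = w \<and> Des (st (drop k u)) = J then h u else 0)"

lemma idD_coprod_eq_coprod_coeff:
  assumes "h \<in> SSym_deg n"
  shows "idD_coprod h (w, m, J) = (if length w + m = n then coprod_coeff n h (length w) w J else 0)"
proof -
  let ?f = "\<lambda>u. h u * (if length u = length w + m \<and> st (take (length w) u) = w
                \<and> Des (st (drop (length w) u)) = J then 1 else 0)"
  have "{u. h u \<noteq> 0} \<subseteq> perms n"
    using assms SSym_deg_vanishes by blast
  then have "idD_coprod h (w, m, J) = sum ?f (perms n)"
    unfolding idD_coprod_def prod.case by (intro sum.mono_neutral_left) (auto simp: finite_perms)
  also have "\<dots> = (if length w + m = n then coprod_coeff n h (length w) w J else 0)"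
  proof (cases "length w + m = n")
    case True
    then show ?thesis
      unfolding coprod_coeff_def if_P[OF True] by (intro sum.cong refl) (auto simp: perms_length)
  next
    case False
    then show ?thesis
      by (simp add: perms_length cong: sum.cong)
  qed
  finally show ?thesis .
qed

lemma coprod_coeff_full:
  assumes "h \<in> SSym_deg n" "length w = n"
  shows "coprod_coeff n h n w J = (if J = {} then h w else 0)"
proof -
  have "coprod_coeff n h n w J = (\<Sum>u \<in> perms n. if u = w \<and> J = {} then h u else 0)"
    unfolding coprod_coeff_def by (intro sum.cong refl) (auto simp: perms_length st_perm Des_def)
  also have "\<dots> = (if J = {} then h w else 0)"
    using assms(1) by (auto simp: finite_perms SSym_deg_vanishes)
  finally show ?thesis .
qed

lemma sum_coprod_coeff:
  assumes "finite W"
  shows "(\<Sum>w \<in> W. coprod_coeff n h k w J) =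
    (\<Sum>u \<in> perms n. if st (take k u) \<in> W \<and> Des (st (drop k u)) = J then h u else 0)"
proof -
  have "(\<Sum>w \<in> W. coprod_coeff n h k w J) = (\<Sum>u \<in> perms n. \<Sum>w \<in> W.
      if st (take k u) = w \<and> Des (st (drop k u)) = J then h u else 0)"
    unfolding coprod_coeff_def by (rule sum.swap)
  also have "\<dots> = (\<Sum>u \<in> perms n. if st (take k u) \<in> W \<and> Des (st (drop k u)) = J then h u else 0)"
  proof (rule sum.cong[OF refl])
    fix u
    show "(\<Sum>w \<in> W. if st (take k u) = w \<and> Des (st (drop k u)) = J then h u else 0) =
      (if st (take k u) \<in> W \<and> Des (st (drop k u)) = J then h u else 0)"
      using assms by (cases "Des (st (drop k u)) = J") (simp_all add: sum.delta')
  qed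
  finally show ?thesis .
qed

lemma Des_subset: "Des xs \<subseteq> {1..<length xs}"
  unfolding Des_def by auto

lemma st_take_st_take:
  assumes "distinct u" "k \<le> l"
  shows "st (take k (st (take l u))) = st (take k u)"
proof -
  have "same_pattern (take k (st (take l u))) (take k (take l u))"
    using assms(1) by (intro same_pattern_take same_pattern_st) simp
  moreover have "take k (take l u) = take k u"
    using assms(2) by (simp add: min_def)
  ultimately show ?thesis
    using assms(1) distinct_st[of "take l u"] by (intro st_eq_if_same_pattern) (auto intro: distinct_take)
qed

lemma Des_st_drop_st_take:
  assumes "distinct u"
  shows "Des (st (drop k (st (take l u)))) = Des (drop k u) \<inter> {..<l - k}"
proof -
  have "Des (st (drop k (st (take l u)))) = Des (drop k (st (take l u)))"
    using assms distinct_st[of "take l u"] by (intro Des_st) simp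
  also have "\<dots> = Des (drop k (take l u))"
    using assms by (intro Des_same_pattern same_pattern_drop same_pattern_st) simp
  also have "drop k (take l u) = take (l - k) (drop k u)"
    by (simp add: drop_take)
  finally show ?thesis
    by (simp add: Des_take)
qed

lemma eq_or_eq_Diff_Max_iff:
  fixes D J :: "nat set"
  assumes "d \<in> J" "J \<subseteq> {..d}"
  shows "D \<inter> {..<d} = J - {d} \<and> D \<subseteq> {..d} \<longleftrightarrow> D = J \<or> D = J - {d}"
proof
  assume low: "D \<inter> {..<d} = J - {d} \<and> D \<subseteq> {..d}"
  have "D - {d} = D \<inter> {..<d}"
  proof (rule set_eqI)
    fix x
    show "x \<in> D - {d} \<longleftrightarrow> x \<in> D \<inter> {..<d}"
      using conjunct2[OF low] by (cases "x < d") auto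
  qed
  with low have Diff: "D - {d} = J - {d}"
    by simp
  show "D = J \<or> D = J - {d}"
  proof (cases "d \<in> D")
    case True
    then show ?thesis
      using Diff assms(1) by (metis insert_Diff)
  next
    case False
    then show ?thesis
      using Diff by simp
  qed
next
  assume "D = J \<or> D = J - {d}"
  moreover have "J \<inter> {..<d} = J - {d}"
  proof (rule set_eqI)
    fix x
    show "x \<in> J \<inter> {..<d} \<longleftrightarrow> x \<in> J - {d}"
      using assms(2) by (cases "x < d") auto
  qed
  ultimately show "D \<inter> {..<d} = J - {d} \<and> D \<subseteq> {..d}"
    using assms(2) by blast
qed

lemma coprod_coeff_not_perm:
  assumes "w \<notin> perms k" "k \<le> n"
  shows "coprod_coeff n h k w J = 0"
  unfolding coprod_coeff_def using st_take_in_perms assms by (intro sum.neutral) auto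

lemma split_after_Max_iff:
  assumes "distinct u" "d \<in> J" "J \<subseteq> {..d}"
  shows "(st (take k (st (take (k + d) u))) = w \<and> Des (st (drop k (st (take (k + d) u)))) = J - {d}
          \<and> Des (st (drop (k + d) u)) = {})
     \<longleftrightarrow> (st (take k u) = w \<and> (Des (st (drop k u)) = J \<or> Des (st (drop k u)) = J - {d}))"
proof -
  have "Des (st (drop (k + d) u)) = Des (drop d (drop k u))"
    using assms(1) by (simp add: Des_st add.commute)
  then have "Des (st (drop (k + d) u)) = {} \<longleftrightarrow> Des (drop k u) \<subseteq> {..d}"
    by (simp only: Des_drop_eq_empty_iff)
  then show ?thesis
    using st_take_st_take[OF assms(1), of k "k + d"] Des_st_drop_st_take[OF assms(1), of k "k + d"]
      Des_st[of "drop k u"] assms(1) eq_or_eq_Diff_Max_iff[OF assms(2,3), of "Des (drop k u)"]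
    by simp
qed

lemma coprod_coeff_add_Diff_Max:
  fixes w :: "nat list"
  assumes "d \<in> J" "J \<subseteq> {..d}" "k + d \<le> n"
  defines "W \<equiv> {w' \<in> perms (k + d). st (take k w') = w \<and> Des (st (drop k w')) = J - {d}}"
  shows "coprod_coeff n h k w J + coprod_coeff n h k w (J - {d}) =
    (\<Sum>w' \<in> W. coprod_coeff n h (k + d) w' {})"
proof -
  have "coprod_coeff n h k w J + coprod_coeff n h k w (J - {d}) = (\<Sum>u \<in> perms n.
      if st (take k u) = w \<and> (Des (st (drop k u)) = J \<or> Des (st (drop k u)) = J - {d}) then h u else 0)"
    unfolding coprod_coeff_def sum.distrib[symmetric] using assms(1) by (intro sum.cong refl) auto
  also have "\<dots> = (\<Sum>u \<in> perms n.
      if st (take (k + d) u) \<in> W \<and> Des (st (drop (k + d) u)) = {} then h u else 0)"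
  proof (intro sum.cong refl)
    fix u assume u: "u \<in> perms n"
    then have "st (take (k + d) u) \<in> perms (k + d)"
      using assms(3) by (rule st_take_in_perms)
    then show "(if st (take k u) = w \<and> (Des (st (drop k u)) = J \<or> Des (st (drop k u)) = J - {d})
        then h u else 0) = (if st (take (k + d) u) \<in> W \<and> Des (st (drop (k + d) u)) = {} then h u else 0)"
      using split_after_Max_iff[OF perms_distinct[OF u] assms(1,2)] by (simp add: W_def)
  qed
  also have "\<dots> = (\<Sum>w' \<in> W. coprod_coeff n h (k + d) w' {})"
    by (rule sum_coprod_coeff[symmetric]) (simp add: W_def finite_perms)
  finally show ?thesis .
qed

lemma coprod_coeff_out_of_range:
  assumes "\<not> J \<subseteq> {1..<n - k}"
  shows "coprod_coeff n h k w J = 0"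
proof -
  have "Des (st (drop k u)) \<noteq> J" if "u \<in> perms n" for u
    using Des_subset[of "st (drop k u)"] that assms by (auto simp: perms_length)
  then show ?thesis
    unfolding coprod_coeff_def by (intro sum.neutral) auto
qed

lemma coprod_coeff_eq_zero:
  assumes ascending: "\<And>j w. j < n \<Longrightarrow> w \<in> perms j \<Longrightarrow> coprod_coeff n h j w {} = 0"
    and "k < n"
  shows "coprod_coeff n h k w J = 0"
proof (induction "card J" arbitrary: J rule: less_induct)
  case less
  consider "\<not> J \<subseteq> {1..<n - k}" | "J = {}" | "J \<subseteq> {1..<n - k}" "J \<noteq> {}"
    by blast
  then show ?case
  proof cases
    case 1
    then show ?thesis
      by (rule coprod_coeff_out_of_range)
  next
    case 2
    then show ?thesis
      using ascending coprod_coeff_not_perm \<open>k < n\<close> by (cases "w \<in> perms k") auto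
  next
    case 3
    then have "finite J"
      using finite_subset by blast
    define d where "d = Max J"
    have d: "d \<in> J" "J \<subseteq> {..d}"
      using \<open>finite J\<close> 3 by (auto simp: d_def)
    then have "k + d < n"
      using 3 by fastforce
    then have "coprod_coeff n h k w J + coprod_coeff n h k w (J - {d}) = 0"
      unfolding coprod_coeff_add_Diff_Max[OF d less_imp_le[OF \<open>k + d < n\<close>]]
      by (intro sum.neutral) (auto intro: ascending)
    moreover have "coprod_coeff n h k w (J - {d}) = 0"
      using less card_Diff1_less[OF \<open>finite J\<close> \<open>d \<in> J\<close>] by blast
    ultimately show ?thesis
      by simp
  qed
qed

lemma coprod_coeff_eq_zero_if_hopf_kernel_deg:
  assumes "h \<in> hopf_kernel_deg n" "k < n" "w \<in> perms k"
  shows "coprod_coeff n h k w {} = 0"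
proof -
  have h: "h \<in> SSym_deg n" and eq: "idD_coprod h = tensor_one h"
    using assms(1) by (auto simp: hopf_kernel_deg_def hopf_kernel_def)
  have "coprod_coeff n h k w {} = idD_coprod h (w, n - k, {})"
    using assms(2,3) by (simp add: idD_coprod_eq_coprod_coeff[OF h] perms_length)
  also have "\<dots> = 0"
    using assms(2) by (simp add: eq tensor_one_def)
  finally show ?thesis .
qed

lemma hopf_kernel_degI:
  assumes h: "h \<in> SSym_deg n"
    and ascending: "\<And>k w. k < n \<Longrightarrow> w \<in> perms k \<Longrightarrow> coprod_coeff n h k w {} = 0"
  shows "h \<in> hopf_kernel_deg n"
proof -
  have "idD_coprod h (w, m, J) = tensor_one h (w, m, J)" for w m J
  proof -
    consider "length w + m \<noteq> n" | "length w + m = n" "m = 0" | "length w + m = n" "m \<noteq> 0"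
      by blast
    then show ?thesis
    proof cases
      case 1
      then have "m = 0 \<Longrightarrow> h w = 0"
        using h SSym_deg_vanishes perms_length by fastforce
      then show ?thesis
        using 1 by (simp add: idD_coprod_eq_coprod_coeff[OF h] tensor_one_def)
    next
      case 2
      then show ?thesis
        by (simp add: idD_coprod_eq_coprod_coeff[OF h] coprod_coeff_full[OF h] tensor_one_def)
    next
      case 3
      then show ?thesis
        using coprod_coeff_eq_zero[OF ascending]
        by (simp add: idD_coprod_eq_coprod_coeff[OF h] tensor_one_def)
    qed
  qed
  then show ?thesis
    using h by (auto simp: hopf_kernel_deg_def hopf_kernel_def SSym_deg_def fun_eq_iff)
qed

lemma hopf_kernel_deg_iff_coprod_coeff:
  "h \<in> hopf_kernel_deg n \<longleftrightarrow> h \<in> SSym_deg n \<and> (\<forall>k < n. \<forall>w \<in> perms k. coprod_coeff n h k w {} = 0)"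
  using coprod_coeff_eq_zero_if_hopf_kernel_deg hopf_kernel_degI
  by (auto simp: hopf_kernel_deg_def)

subsection \<open>Permutations ending in an identity block\<close>

text \<open>The over product \<open>x / id\<^sub>n\<^sub>-\<^sub>k\<close> of Loday and Ronco: the letters of \<open>x \<in> \<frakS>\<^sub>k\<close>
  raised by \<open>n - k\<close>, followed by \<open>1, \<dots>, n - k\<close>.\<close>

definition over_id :: "nat \<Rightarrow> nat \<Rightarrow> nat list \<Rightarrow> nat list" where
  "over_id n k x = map (\<lambda>i. i + (n - k)) x @ [1..<n - k + 1]"

lemma over_id_in_perms:
  assumes x: "x \<in> perms k" and "k \<le> n"
  shows "over_id n k x \<in> perms n"
proof -
  have "distinct x" "set x = {1..k}"
    using x by (auto simp: perms_def)
  moreover have "(\<lambda>i. i + (n - k)) ` {1..k} = {1 + (n - k)..k + (n - k)}"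
    by (rule image_add_atLeastAtMost')
  ultimately show ?thesis
    using \<open>k \<le> n\<close> by (auto simp: perms_def over_id_def distinct_map inj_on_def)
qed

lemma drop_over_id: "length x = k \<Longrightarrow> drop k (over_id n k x) = [1..<n - k + 1]"
  by (simp add: over_id_def)

lemma nth_over_id:
  assumes "length x = k" "i < n" "k \<le> n"
  shows "over_id n k x ! i = (if i < k then x ! i + (n - k) else i - k + 1)"
  using assms by (auto simp: over_id_def nth_append)

lemma Inv_over_id:
  assumes x: "x \<in> perms k" and "k \<le> n"
  shows "Inv (over_id n k x) = Inv x \<union> {(i, j). 1 \<le> i \<and> i \<le> k \<and> k < j \<and> j \<le> n}"
proof -
  have len: "length x = k" "length (over_id n k x) = n"
    using perms_length x over_id_in_perms[OF x \<open>k \<le> n\<close>] by blast+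
  have pos: "0 < x ! a" if "a < k" for a
  proof -
    have "x ! a \<in> set x"
      using that len by simp
    then show ?thesis
      using x by (auto simp: perms_def)
  qed
  show ?thesis
  proof (rule set_eqI, clarify)
    fix i j
    consider "j \<le> k" | "i \<le> k" "k < j" | "k < i"
      by arith
    then show "(i, j) \<in> Inv (over_id n k x) \<longleftrightarrow>
        (i, j) \<in> Inv x \<union> {(i, j). 1 \<le> i \<and> i \<le> k \<and> k < j \<and> j \<le> n}"
    proof cases
      case 1
      then show ?thesis
        using \<open>k \<le> n\<close> len by (auto simp: Inv_def nth_over_id split: if_split_asm)
    next
      case 2
      then show ?thesis
        using \<open>k \<le> n\<close> len pos[of "i - 1"] by (auto simp: Inv_def nth_over_id)
    next
      case 3
      then show ?thesis
        using \<open>k \<le> n\<close> len by (auto simp: Inv_def nth_over_id split: if_split_asm)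
    qed
  qed
qed

lemma Des_eq_empty_iff_sorted: "Des xs = {} \<longleftrightarrow> sorted xs"
proof -
  have "Des xs = {} \<longleftrightarrow> (\<forall>i. Suc i < length xs \<longrightarrow> xs ! i \<le> xs ! Suc i)"
  proof
    assume empty: "Des xs = {}"
    show "\<forall>i. Suc i < length xs \<longrightarrow> xs ! i \<le> xs ! Suc i"
    proof (intro allI impI)
      fix i assume "Suc i < length xs"
      moreover have "Suc i \<notin> Des xs"
        using empty by simp
      ultimately show "xs ! i \<le> xs ! Suc i"
        by (simp add: Des_def not_less)
    qed
  next
    assume mono: "\<forall>i. Suc i < length xs \<longrightarrow> xs ! i \<le> xs ! Suc i"
    show "Des xs = {}"
    proof (rule equals0I)
      fix p assume "p \<in> Des xs"
      then obtain i where "p = Suc i" "Suc i < length xs" "xs ! i > xs ! Suc i"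
        unfolding Des_def by (cases p) auto
      then show False
        using mono by (simp add: not_less[symmetric])
    qed
  qed
  then show ?thesis
    by (simp add: sorted_iff_nth_Suc)
qed

lemma wle_over_id_iff:
  assumes x: "x \<in> perms k" and "k \<le> n" and v: "v \<in> perms n"
  shows "wle v (over_id n k x) \<longleftrightarrow> wle (st (take k v)) x \<and> Des (st (drop k v)) = {}"
proof -
  have Inv_x: "Inv x \<subseteq> {(i, j). j \<le> k}"
    using perms_length[OF x] by (auto simp: Inv_def)
  have Inv_v: "Inv v \<subseteq> {(i, j). 1 \<le> i \<and> i < j \<and> j \<le> n}"
    using perms_length[OF v] by (auto simp: Inv_def)
  have "wle v (over_id n k x) \<longleftrightarrow> Inv v \<subseteq> Inv x \<union> {(i, j). 1 \<le> i \<and> i \<le> k \<and> k < j \<and> j \<le> n}"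
    using v over_id_in_perms[OF x \<open>k \<le> n\<close>] by (simp add: wle_perms_iff Inv_over_id[OF x \<open>k \<le> n\<close>])
  also have "\<dots> \<longleftrightarrow> {(i, j) \<in> Inv v. j \<le> k} \<subseteq> Inv x \<and> (\<forall>(i, j) \<in> Inv v. i \<le> k)"
    using Inv_x Inv_v by fastforce
  also have "{(i, j) \<in> Inv v. j \<le> k} = Inv (st (take k v))"
    using perms_distinct[OF v] by (simp add: Inv_st Inv_take)
  also have "Inv (st (take k v)) \<subseteq> Inv x \<longleftrightarrow> wle (st (take k v)) x"
    using st_take_in_perms[OF v \<open>k \<le> n\<close>] x by (simp add: wle_perms_iff)
  also have "(\<forall>(i, j) \<in> Inv v. i \<le> k) \<longleftrightarrow> Des (st (drop k v)) = {}"
    using perms_distinct[OF v] by (simp add: Des_st Des_eq_empty_iff_sorted sorted_drop_iff_Inv)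
  finally show ?thesis .
qed

lemma M_coeff_over_id:
  assumes x: "x \<in> perms k" and "k \<le> n"
  shows "M_coeff n h (over_id n k x) = (\<Sum>w \<in> {w \<in> perms k. wle w x}. coprod_coeff n h k w {})"
proof -
  have "M_coeff n h (over_id n k x) = (\<Sum>v \<in> perms n. if wle v (over_id n k x) then h v else 0)"
    unfolding M_coeff_def by (rule sum.inter_filter) (rule finite_perms)
  also have "\<dots> = (\<Sum>v \<in> perms n.
      if st (take k v) \<in> {w \<in> perms k. wle w x} \<and> Des (st (drop k v)) = {} then h v else 0)"
    using wle_over_id_iff[OF x \<open>k \<le> n\<close>] st_take_in_perms \<open>k \<le> n\<close> by (intro sum.cong refl) auto
  also have "\<dots> = (\<Sum>w \<in> {w \<in> perms k. wle w x}. coprod_coeff n h k w {})"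
    by (rule sum_coprod_coeff[symmetric]) (simp add: finite_perms)
  finally show ?thesis .
qed

lemma coprod_coeff_vanish_iff_M_coeff_over_id_vanish:
  assumes "k \<le> n"
  shows "(\<forall>w \<in> perms k. coprod_coeff n h k w {} = 0) \<longleftrightarrow>
    (\<forall>x \<in> perms k. M_coeff n h (over_id n k x) = 0)"
proof
  assume "\<forall>w \<in> perms k. coprod_coeff n h k w {} = 0"
  then show "\<forall>x \<in> perms k. M_coeff n h (over_id n k x) = 0"
    by (simp add: M_coeff_over_id[OF _ assms])
next
  assume "\<forall>x \<in> perms k. M_coeff n h (over_id n k x) = 0"
  then have "(\<Sum>w \<in> {w \<in> perms k. wle w x}. coprod_coeff n h k w {}) = 0" if "x \<in> perms k" for x
    using that by (simp add: M_coeff_over_id[OF _ assms])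
  then show "\<forall>w \<in> perms k. coprod_coeff n h k w {} = 0"
    using eq_zero_if_sums_below_wle_eq_zero by blast
qed

definition perms_no_id_suffix :: "nat \<Rightarrow> nat list set" where
  "perms_no_id_suffix n = {u \<in> perms n. \<forall>k < n. drop k u \<noteq> [1..<n - k + 1]}"

lemma drop_eq_upt_iff:
  assumes "length u = n" "k \<le> n"
  shows "drop k u = [1..<n - k + 1] \<longleftrightarrow> (\<forall>i \<in> {1..n - k}. u ! (k + i - 1) = i)"
proof -
  have "drop k u = [1..<n - k + 1] \<longleftrightarrow> (\<forall>i < n - k. u ! (k + i) = Suc i)"
    using assms by (auto simp: list_eq_iff_nth_eq simp del: upt_Suc)
  also have "\<dots> \<longleftrightarrow> (\<forall>i \<in> Suc ` {..<n - k}. u ! (k + i - 1) = i)"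
    by auto
  finally show ?thesis
    by (simp add: image_Suc_lessThan)
qed

lemma perms_no_id_suffix_eq:
  "perms_no_id_suffix n = {u \<in> perms n. \<not> (\<exists>k < n. \<forall>i \<in> {1..n - k}. u ! (k + i - 1) = i)}"
  unfolding perms_no_id_suffix_def
proof (intro Collect_cong conj_cong refl)
  fix u assume "u \<in> perms n"
  then show "(\<forall>k < n. drop k u \<noteq> [1..<n - k + 1]) \<longleftrightarrow>
      \<not> (\<exists>k < n. \<forall>i \<in> {1..n - k}. u ! (k + i - 1) = i)"
    using drop_eq_upt_iff[of u n] perms_length by auto
qed

lemma map_minus_in_perms:
  assumes "distinct xs" "set xs = (\<lambda>i. i + m) ` {1..k}"
  shows "map (\<lambda>i. i - m) xs \<in> perms k" "map (\<lambda>i. i + m) (map (\<lambda>i. i - m) xs) = xs"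
proof -
  have ge: "\<forall>y \<in> set xs. m \<le> y"
    using assms(2) by auto
  then show "map (\<lambda>i. i + m) (map (\<lambda>i. i - m) xs) = xs"
    by (simp add: map_idI)
  have "inj_on (\<lambda>i. i - m) (set xs)"
    using ge by (auto simp: inj_on_def eq_diff_iff)
  moreover have "(\<lambda>i. i - m) ` set xs = {1..k}"
    unfolding assms(2) image_image by simp
  ultimately show "map (\<lambda>i. i - m) xs \<in> perms k"
    using assms(1) by (simp add: perms_def distinct_map)
qed

lemma mem_over_id_image:
  assumes u: "u \<in> perms n" and "k \<le> n" and drop: "drop k u = [1..<n - k + 1]"
  shows "u \<in> over_id n k ` perms k"
proof -
  have "distinct (take k u @ drop k u)" and set_u: "set (take k u @ drop k u) = {1..n}"
    using u by (simp_all add: perms_def)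
  then have distinct: "distinct (take k u)" and disjoint: "set (take k u) \<inter> set (drop k u) = {}"
    unfolding distinct_append by blast+
  have union: "set (take k u) \<union> set (drop k u) = {1..n}"
    using set_u by (simp only: set_append)
  have "set (drop k u) = {1..n - k}"
    unfolding drop by (simp add: atLeastLessThanSuc_atLeastAtMost del: upt_Suc)
  with disjoint union have "set (take k u) = {1..n} - {1..n - k}"
    by blast
  also have "\<dots> = {1 + (n - k)..k + (n - k)}"
    using \<open>k \<le> n\<close> by auto
  also have "\<dots> = (\<lambda>i. i + (n - k)) ` {1..k}"
    by (rule image_add_atLeastAtMost'[symmetric])
  finally have take: "set (take k u) = (\<lambda>i. i + (n - k)) ` {1..k}" .
  define x where "x = map (\<lambda>i. i - (n - k)) (take k u)"
  have "over_id n k x = u"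
    unfolding over_id_def x_def map_minus_in_perms(2)[OF distinct take] drop[symmetric] by simp
  moreover have "x \<in> perms k"
    unfolding x_def by (rule map_minus_in_perms(1)[OF distinct take])
  ultimately show ?thesis
    by (rule image_eqI[OF sym])
qed

lemma perms_minus_perms_no_id_suffix:
  "perms n - perms_no_id_suffix n = (\<Union>k < n. over_id n k ` perms k)"
proof
  show "perms n - perms_no_id_suffix n \<subseteq> (\<Union>k < n. over_id n k ` perms k)"
  proof
    fix u assume u: "u \<in> perms n - perms_no_id_suffix n"
    then obtain k where "k < n" "drop k u = [1..<n - k + 1]"
      by (auto simp: perms_no_id_suffix_def)
    then have "u \<in> over_id n k ` perms k"
      using u by (intro mem_over_id_image) auto
    with \<open>k < n\<close> show "u \<in> (\<Union>k < n. over_id n k ` perms k)"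
      by blast
  qed
  show "(\<Union>k < n. over_id n k ` perms k) \<subseteq> perms n - perms_no_id_suffix n"
  proof
    fix u assume "u \<in> (\<Union>k < n. over_id n k ` perms k)"
    then obtain k x where "k < n" "x \<in> perms k" "u = over_id n k x"
      by blast
    then have "u \<in> perms n" "drop k u = [1..<n - k + 1]"
      by (simp_all add: over_id_in_perms drop_over_id perms_length)
    with \<open>k < n\<close> show "u \<in> perms n - perms_no_id_suffix n"
      by (auto simp: perms_no_id_suffix_def)
  qed
qed

lemma card_perms: "card (perms k) = fact k"
proof -
  have "perms k = permutations_of_set {1..k}"
    by (auto simp: perms_def permutations_of_set_def)
  then show ?thesis
    by simp
qed

lemma inj_over_id: "inj (over_id n k)"
  by (auto simp: inj_def over_id_def inj_map_eq_map)

lemma last_over_id: "k < n \<Longrightarrow> last (over_id n k x) = n - k"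
  by (simp add: over_id_def last_upt del: upt_Suc)

lemma card_perms_no_id_suffix: "card (perms_no_id_suffix n) = fact n - (\<Sum>k < n. fact k)"
proof -
  have "card (\<Union>k < n. over_id n k ` perms k) = (\<Sum>k < n. card (over_id n k ` perms k))"
  proof (rule card_UN_disjoint)
    show "\<forall>i \<in> {..<n}. \<forall>j \<in> {..<n}. i \<noteq> j \<longrightarrow> over_id n i ` perms i \<inter> over_id n j ` perms j = {}"
      by (auto simp: last_over_id dest: arg_cong[of _ _ last])
  qed (simp_all add: finite_perms)
  also have "\<dots> = (\<Sum>k < n. fact k)"
    by (simp add: card_image[OF inj_on_subset[OF inj_over_id]] card_perms)
  finally have complement: "card (perms n - perms_no_id_suffix n) = (\<Sum>k < n. fact k)"
    by (simp add: perms_minus_perms_no_id_suffix)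
  have "perms_no_id_suffix n \<subseteq> perms n"
    by (auto simp: perms_no_id_suffix_def)
  then have "card (perms n - perms_no_id_suffix n) = fact n - card (perms_no_id_suffix n)"
    and "card (perms_no_id_suffix n) \<le> fact n"
    using card_mono[OF finite_perms] by (simp_all add: card_Diff_subset finite_subset finite_perms card_perms)
  with complement show ?thesis
    by arith
qed

lemma hopf_kernel_deg_iff_M_coeff:
  "h \<in> hopf_kernel_deg n \<longleftrightarrow>
    h \<in> SSym_deg n \<and> (\<forall>u \<in> perms n - perms_no_id_suffix n. M_coeff n h u = 0)"
  unfolding hopf_kernel_deg_iff_coprod_coeff perms_minus_perms_no_id_suffix
  by (auto simp: coprod_coeff_vanish_iff_M_coeff_over_id_vanish)

theorem mainTheorem15:
  fixes n :: nat
  assumes "n \<ge> 1"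
  defines "B \<equiv> {u \<in> perms n. \<not> (\<exists>k < n. \<forall>i \<in> {1..n - k}. u ! (k + i - 1) = i)}"
  shows "(\<forall>u \<in> B. Mb u \<in> hopf_kernel_deg n)
       \<and> (\<forall>h \<in> hopf_kernel_deg n. \<exists>!a :: nat list \<Rightarrow> rat.
             (\<forall>u. u \<notin> B \<longrightarrow> a u = 0) \<and> h = (\<lambda>v. \<Sum>u \<in> B. a u * Mb u v))
       \<and> card B = fact n - (\<Sum>k < n. fact k)"
proof -
  have B: "B = perms_no_id_suffix n"
    by (simp add: B_def perms_no_id_suffix_eq)
  then have "B \<subseteq> perms n"
    by (auto simp: perms_no_id_suffix_def)
  have "Mb u \<in> hopf_kernel_deg n" if "u \<in> B" for u
    using that \<open>B \<subseteq> perms n\<close> by (auto simp: hopf_kernel_deg_iff_M_coeff B Mb_in_SSym_deg M_coeff_Mb)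
  moreover have "\<exists>!a. (\<forall>u. u \<notin> B \<longrightarrow> a u = 0) \<and> h = (\<lambda>v. \<Sum>u \<in> B. a u * Mb u v)"
    if "h \<in> hopf_kernel_deg n" for h
    using that \<open>B \<subseteq> perms n\<close> by (intro unique_M_expansion) (auto simp: hopf_kernel_deg_iff_M_coeff B)
  ultimately show ?thesis
    using card_perms_no_id_suffix B by blast
qed

end
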